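(* Let $p\in[0,1)$, let $f:2^{\mathcal{N}}\to\mathbb{R}_{\ge0}$ be a non-negative submodular function with multilinear extension $F$, and let $\mathcal{P}\subseteq[0,1]^{\mathcal{N}}$ be a downward-closed solvable polytope such that $z_i\le p$ for all $\bm{z}\in\mathcal{P}$ and $i\in\mathcal{N}$. Let $\bm{x}(\cdot)$ be the trajectory of the Measured Continuous Greedy algorithm on $F$ and $\mathcal{P}$. Then for every $b\in[0,1]$, $\bm{x}(b)\in b\cdot\mathcal{P}$ and \[F(\bm{x}(b))\ge\begin{cases} b\,e^{-b}\,\max_{\bm{z}\in\mathcal{P}} f^+(\bm{z}), & 0\le b\le \ln\frac{1}{1-p},\\[2pt] \big(1-p-e^{-b}(1+\ln(1-p))\big)\max_{\bm{z}\in\mathcal{P}} f^+(\bm{z}), & \ln\frac{1}{1-p}\le b\le 1.\end{cases}\]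
   Context: Submodular: $f(A)+f(B)\ge f(A\cup B)+f(A\cap B)$; non-negative: $f\ge0$, $f(\emptyset)=0$. Multilinear extension $F(\bm{x})=\sum_{S} f(S)\prod_{i\in S}x_i\prod_{i\notin S}(1-x_i)$; concave closure $f^+(\bm{x})=\max\{\sum_S a_Sf(S): a_S\ge0,\sum_Sa_S=1,\sum_Sa_S\mathbf{1}_S=\bm{x}\}$. A polytope $\mathcal{P}\subseteq[0,1]^{\mathcal{N}}$ is downward-closed if $\bm{0}\le\bm{y}\le\bm{z}\in\mathcal{P}$ implies $\bm{y}\in\mathcal{P}$, and solvable if linear functions can be maximized over it in polynomial time. The Measured Continuous Greedy algorithm (continuous-time version) produces $\bm{x}:[0,1]\to[0,1]^{\mathcal{N}}$ with $\bm{x}(0)=\bm{0}$ and $\frac{d}{dt}\bm{x}(t)=\bm{v}(t)\circ(\bm{1}-\bm{x}(t))$, where $\circ$ is the coordinatewise product and $\bm{v}(t)\in\arg\max_{\bm{v}\in\mathcal{P}}\langle \bm{v}\circ(\bm{1}-\bm{x}(t)),\nabla F(\bm{x}(t))\rangle$; its output at time $b$ is $\bm{x}(b)$. $b\cdot\mathcal{P}=\{b\bm{z}:\bm{z}\in\mathcal{P}\}$. *)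

theory Defs
  imports "HOL-Analysis.Analysis"
begin

text \<open>Ground set N is the finite type 'n (N = UNIV); vectors in [0,1]^N are real ^ 'n.\<close>

definition nonneg_submodular :: "('n::finite set \<Rightarrow> real) \<Rightarrow> bool" where
  "nonneg_submodular f \<longleftrightarrow>
     (\<forall>A B. f A + f B \<ge> f (A \<union> B) + f (A \<inter> B)) \<and> (\<forall>S. f S \<ge> 0) \<and> f {} = 0"

definition multilinear_ext :: "('n::finite set \<Rightarrow> real) \<Rightarrow> real ^ 'n \<Rightarrow> real" where
  "multilinear_ext f x =
     (\<Sum>S\<in>(UNIV :: 'n set set). f S * (\<Prod>i\<in>S. x $ i) * (\<Prod>i\<in>- S. 1 - x $ i))"

definition indicator_vec :: "'n::finite set \<Rightarrow> real ^ 'n" where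
  "indicator_vec S = (\<chi> i. if i \<in> S then 1 else 0)"

definition concave_closure :: "('n::finite set \<Rightarrow> real) \<Rightarrow> real ^ 'n \<Rightarrow> real" where
  "concave_closure f z = Sup {(\<Sum>S\<in>UNIV. a S * f S) | a.
      (\<forall>S. a S \<ge> 0) \<and> (\<Sum>S\<in>UNIV. a S) = 1 \<and> (\<Sum>S\<in>UNIV. a S *\<^sub>R indicator_vec S) = z}"

definition grad :: "(real ^ 'n \<Rightarrow> real) \<Rightarrow> real ^ 'n \<Rightarrow> real ^ 'n" where
  "grad F x = (\<chi> i. deriv (\<lambda>s. F (x + s *\<^sub>R axis i 1)) 0)"

definition hadamard :: "real ^ 'n \<Rightarrow> real ^ 'n \<Rightarrow> real ^ 'n" (infixl "\<circ>\<^sub>v" 70) where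
  "hadamard u w = (\<chi> i. u $ i * w $ i)"

definition down_closed :: "(real ^ 'n) set \<Rightarrow> bool" where
  "down_closed P \<longleftrightarrow> (\<forall>y z. z \<in> P \<and> 0 \<le> y \<and> y \<le> z \<longrightarrow> y \<in> P)"

definition in_unit_cube :: "(real ^ 'n) set \<Rightarrow> bool" where
  "in_unit_cube P \<longleftrightarrow> (\<forall>z\<in>P. \<forall>i. 0 \<le> z $ i \<and> z $ i \<le> 1)"

definition mcg_trajectory ::
  "(real ^ 'n \<Rightarrow> real) \<Rightarrow> (real ^ 'n) set \<Rightarrow> (real \<Rightarrow> real ^ 'n) \<Rightarrow> (real \<Rightarrow> real ^ 'n) \<Rightarrow> bool" where
  "mcg_trajectory F P x v \<longleftrightarrow>
     x 0 = 0 \<and>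
     (\<forall>t\<in>{0..1}.
        v t \<in> P \<and>
        (\<forall>w\<in>P. (w \<circ>\<^sub>v (1 - x t)) \<bullet> grad F (x t) \<le> (v t \<circ>\<^sub>v (1 - x t)) \<bullet> grad F (x t)) \<and>
        (x has_vector_derivative (v t \<circ>\<^sub>v (1 - x t))) (at t within {0..1}))"

end

theory Submission
  imports Defs
begin

text \<open>
  Fix a distribution \<open>a\<close> on sets whose vector of marginals \<open>z\<close> lies in \<open>P\<close>, and let
  \<open>V = \<Sum>\<^sub>S a\<^sub>S f(S)\<close>. Submodularity makes the multilinear extension \<open>F\<close> concave along
  nonnegative directions, with antitone gradient; consequently, if every coordinate of \<open>x\<close> is at
  most \<open>1 - m\<close>, moving from \<open>x\<close> in direction \<open>z \<circ> (1 - x)\<close> gains at least \<open>m V - F(x)\<close>.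
  Along the trajectory \<open>x\<^sub>i(t) \<le> 1 - e\<^sup>-\<^sup>t\<close> and \<open>x\<^sub>i(t) \<le> p t\<close>, and \<open>v(t)\<close> is at least as good a
  direction as \<open>z\<close>, so \<open>F(x(t))' \<ge> e\<^sup>-\<^sup>t V - F(x(t))\<close>, which integrates to \<open>F(x(b)) \<ge> b e\<^sup>-\<^sup>b V\<close>.
  For \<open>t \<ge> ln (1/(1-p))\<close> the bound \<open>x\<^sub>i \<le> p\<close> is the stronger one, giving
  \<open>F(x(t))' \<ge> (1 - p) V - F(x(t))\<close>, which integrates to the second bound. Taking the supremum
  over \<open>a\<close> and \<open>z\<close> gives the theorem. Finally \<open>x(b) \<in> b P\<close> because the velocity stays in
  the closed convex set \<open>P\<close>.
\<close>

definition submodular :: "('n set \<Rightarrow> real) \<Rightarrow> bool" where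
  "submodular f \<longleftrightarrow> (\<forall>A B. f (A \<union> B) + f (A \<inter> B) \<le> f A + f B)"

lemma nonneg_submodular_imp_submodular: "nonneg_submodular f \<Longrightarrow> submodular f"
  by (simp add: nonneg_submodular_def submodular_def)

lemma submodular_marginal_antimono:
  assumes "submodular f" "S \<subseteq> T"
  shows "f (insert j T) - f (T - {j}) \<le> f (insert j S) - f (S - {j})"
proof -
  have "f (insert j S \<union> (T - {j})) + f (insert j S \<inter> (T - {j})) \<le> f (insert j S) + f (T - {j})"
    using assms(1) unfolding submodular_def by blast
  moreover have "insert j S \<union> (T - {j}) = insert j T" "insert j S \<inter> (T - {j}) = S - {j}"
    using assms(2) by auto
  ultimately show ?thesis by simp
qed

section \<open>Independent rounding\<close>

definition vec_upd :: "'a ^ 'n \<Rightarrow> 'n \<Rightarrow> 'a \<Rightarrow> 'a ^ 'n" where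
  "vec_upd y j c = (\<chi> i. if i = j then c else y $ i)"

lemma vec_upd_nth [simp]: "vec_upd y j c $ i = (if i = j then c else y $ i)"
  by (simp add: vec_upd_def)

lemma vec_upd_upd [simp]: "vec_upd (vec_upd y j c) j d = vec_upd y j d"
  by (simp add: vec_eq_iff)

lemma vec_upd_add_axis [simp]: "vec_upd (y + s *\<^sub>R axis j 1) j c = vec_upd y j c"
  by (simp add: vec_eq_iff axis_def)

definition rounding_prob :: "real ^ 'n::finite \<Rightarrow> 'n set \<Rightarrow> real" where
  "rounding_prob y S = (\<Prod>i\<in>S. y $ i) * (\<Prod>i\<in>- S. 1 - y $ i)"

definition rounding_expect :: "real ^ 'n::finite \<Rightarrow> ('n set \<Rightarrow> real) \<Rightarrow> real" where
  "rounding_expect y g = (\<Sum>S\<in>UNIV. g S * rounding_prob y S)"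

lemma multilinear_ext_eq_rounding_expect: "multilinear_ext f y = rounding_expect y f"
  by (simp add: multilinear_ext_def rounding_expect_def rounding_prob_def mult.assoc)

lemma rounding_prob_vec_upd_zero:
  assumes "j \<notin> S"
  shows "rounding_prob (vec_upd y j 0) S = (\<Prod>i\<in>S. y $ i) * (\<Prod>i\<in>- S - {j}. 1 - y $ i)"
proof -
  have "(\<Prod>i\<in>S. vec_upd y j 0 $ i) = (\<Prod>i\<in>S. y $ i)"
    using assms by (intro prod.cong) auto
  moreover have "(\<Prod>i\<in>- S. 1 - vec_upd y j 0 $ i) = (\<Prod>i\<in>- S - {j}. 1 - y $ i)"
    using assms by (subst prod.remove[of _ j]) (auto intro!: prod.cong)
  ultimately show ?thesis by (simp add: rounding_prob_def)
qed

lemma rounding_prob_notin: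
  assumes "j \<notin> S"
  shows "rounding_prob y S = (1 - y $ j) * rounding_prob (vec_upd y j 0) S"
  using assms
  by (subst rounding_prob_vec_upd_zero[OF assms]) (simp add: rounding_prob_def prod.remove[of "- S" j])

lemma rounding_prob_insert:
  assumes "j \<notin> S"
  shows "rounding_prob y (insert j S) = y $ j * rounding_prob (vec_upd y j 0) S"
proof -
  have "- insert j S = - S - {j}" by auto
  then show ?thesis
    using assms by (subst rounding_prob_vec_upd_zero[OF assms]) (simp add: rounding_prob_def)
qed

lemma sum_UNIV_split_insert:
  fixes \<phi> :: "'n::finite set \<Rightarrow> 'a::comm_monoid_add"
  shows "(\<Sum>S\<in>UNIV. \<phi> S) = (\<Sum>S | j \<notin> S. \<phi> S + \<phi> (insert j S))"
proof -
  have "S \<in> {S. j \<notin> S} \<union> insert j ` {S. j \<notin> S}" for S :: "'n set"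
    by (cases "j \<in> S") (auto intro: image_eqI[of _ _ "S - {j}"])
  then have split: "(UNIV :: 'n set set) = {S. j \<notin> S} \<union> insert j ` {S. j \<notin> S}"
    by blast
  have inj: "inj_on (insert j) {S. j \<notin> S}"
    by (auto simp: inj_on_def insert_ident)
  have "(\<Sum>S\<in>UNIV. \<phi> S) = (\<Sum>S | j \<notin> S. \<phi> S) + (\<Sum>S\<in>insert j ` {S. j \<notin> S}. \<phi> S)"
    by (subst split, rule sum.union_disjoint) auto
  also have "(\<Sum>S\<in>insert j ` {S. j \<notin> S}. \<phi> S) = (\<Sum>S | j \<notin> S. \<phi> (insert j S))"
    by (rule sum.reindex[OF inj, unfolded comp_def])
  finally show ?thesis by (simp add: sum.distrib)
qed

lemma rounding_expect_split:
  "rounding_expect y g =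
     (\<Sum>S | j \<notin> S. ((1 - y $ j) * g S + y $ j * g (insert j S)) * rounding_prob (vec_upd y j 0) S)"
  unfolding rounding_expect_def
proof (subst sum_UNIV_split_insert[of _ j], rule sum.cong)
  fix S assume "S \<in> {S. j \<notin> S}"
  then show "g S * rounding_prob y S + g (insert j S) * rounding_prob y (insert j S) =
      ((1 - y $ j) * g S + y $ j * g (insert j S)) * rounding_prob (vec_upd y j 0) S"
    by (simp add: rounding_prob_notin[of j S y] rounding_prob_insert algebra_simps del: vec_upd_nth)
qed simp

lemma rounding_expect_affine:
  "rounding_expect y g =
     y $ j * rounding_expect (vec_upd y j 1) g + (1 - y $ j) * rounding_expect (vec_upd y j 0) g"
  by (subst (1 2 3) rounding_expect_split[of _ _ j])
    (simp add: sum_distrib_left algebra_simps flip: sum.distrib)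

lemma rounding_expect_upd_one: "rounding_expect (vec_upd y j 1) g = rounding_expect y (\<lambda>S. g (insert j S))"
  by (subst (1 2) rounding_expect_split[of _ _ j], rule sum.cong) (auto simp: algebra_simps)

lemma rounding_expect_upd_zero: "rounding_expect (vec_upd y j 0) g = rounding_expect y (\<lambda>S. g (S - {j}))"
  by (subst (1 2) rounding_expect_split[of _ _ j], rule sum.cong) (auto simp: algebra_simps)

lemma rounding_prob_nonneg: "y \<in> {0..1} \<Longrightarrow> 0 \<le> rounding_prob y S"
  unfolding rounding_prob_def by (intro mult_nonneg_nonneg prod_nonneg) (auto simp: less_eq_vec_def)

lemma rounding_expect_mono:
  "y \<in> {0..1} \<Longrightarrow> (\<And>S. g S \<le> h S) \<Longrightarrow> rounding_expect y g \<le> rounding_expect y h"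
  unfolding rounding_expect_def by (intro sum_mono mult_right_mono rounding_prob_nonneg) auto

lemma rounding_expect_diff:
  "rounding_expect y (\<lambda>S. g S - h S) = rounding_expect y g - rounding_expect y h"
  unfolding rounding_expect_def by (simp add: sum_subtractf left_diff_distrib)

lemma sum_rounding_prob: "(\<Sum>S\<in>UNIV. rounding_prob y S) = 1"
proof -
  have "(\<Prod>i\<in>UNIV. y $ i + (1 - y $ i)) =
      (\<Sum>S\<in>Pow UNIV. (\<Prod>i\<in>S. y $ i) * (\<Prod>i\<in>UNIV - S. 1 - y $ i))"
    by (rule prod_add) simp
  then show ?thesis by (simp add: rounding_prob_def Compl_eq_Diff_UNIV)
qed

lemma rounding_expect_const [simp]: "rounding_expect y (\<lambda>_. c) = c"
  by (simp add: rounding_expect_def flip: sum_distrib_left add: sum_rounding_prob)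

lemma rounding_expect_indicator: "rounding_expect y (\<lambda>S. if i \<in> S then 1 else 0) = y $ i"
  by (subst rounding_expect_affine[of _ _ i]) (simp add: rounding_expect_upd_one rounding_expect_upd_zero)

lemma rounding_expect_antimono_coord:
  assumes "y \<in> {0..1}" "y $ k \<le> c" "c \<le> 1" and anti: "\<And>S T. S \<subseteq> T \<Longrightarrow> g T \<le> g S"
  shows "rounding_expect (vec_upd y k c) g \<le> rounding_expect y g"
proof -
  define A where "A = rounding_expect (vec_upd y k 1) g"
  define B where "B = rounding_expect (vec_upd y k 0) g"
  have "A - B = rounding_expect y (\<lambda>S. g (insert k S) - g (S - {k}))"
    by (simp add: A_def B_def rounding_expect_upd_one rounding_expect_upd_zero rounding_expect_diff)
  also have "\<dots> \<le> 0"
    using rounding_expect_mono[OF assms(1), of _ "\<lambda>_. 0"] anti by (simp add: subset_insertI2)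
  finally have "(c - y $ k) * (A - B) \<le> 0"
    using assms(2) by (simp add: mult_nonneg_nonpos)
  then show ?thesis
    using rounding_expect_affine[of "vec_upd y k c" g k] rounding_expect_affine[of y g k]
    by (simp add: A_def B_def algebra_simps)
qed

lemma rounding_expect_antimono:
  assumes "y \<in> {0..1}" "y' \<in> {0..1}" "y \<le> y'" and anti: "\<And>S T. S \<subseteq> T \<Longrightarrow> g T \<le> g S"
  shows "rounding_expect y' g \<le> rounding_expect y g"
proof -
  define mix where "mix K = (\<chi> i. if i \<in> K then y' $ i else y $ i)" for K
  have "rounding_expect (mix K) g \<le> rounding_expect y g" if "finite K" for K
    using that
  proof (induction K rule: finite_induct)
    case empty
    then show ?case by (simp add: mix_def)
  next
    case (insert k K)
    have "mix (insert k K) = vec_upd (mix K) k (y' $ k)"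
      by (simp add: mix_def vec_eq_iff)
    moreover have "rounding_expect (vec_upd (mix K) k (y' $ k)) g \<le> rounding_expect (mix K) g"
      using assms insert.hyps
      by (intro rounding_expect_antimono_coord) (auto simp: mix_def less_eq_vec_def)
    ultimately show ?case using insert.IH by simp
  qed
  moreover have "mix UNIV = y'" by (simp add: mix_def vec_eq_iff)
  ultimately show ?thesis by (metis finite)
qed

section \<open>The multilinear extension\<close>

lemma hadamard_nth [simp]: "(u \<circ>\<^sub>v w) $ i = u $ i * w $ i"
  by (simp add: hadamard_def)

lemma multilinear_ext_along_axis:
  "multilinear_ext f (y + s *\<^sub>R axis j 1) =
     (y $ j + s) * rounding_expect (vec_upd y j 1) f + (1 - (y $ j + s)) * rounding_expect (vec_upd y j 0) f"
proof -
  have "(y + s *\<^sub>R axis j 1) $ j = y $ j + s" by (simp add: axis_def)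
  then show ?thesis
    using rounding_expect_affine[of "y + s *\<^sub>R axis j 1" f j] by (simp add: multilinear_ext_eq_rounding_expect)
qed

lemma grad_multilinear_ext:
  "grad (multilinear_ext f) y $ j = rounding_expect y (\<lambda>S. f (insert j S) - f (S - {j}))"
proof -
  define A where "A = rounding_expect (vec_upd y j 1) f"
  define B where "B = rounding_expect (vec_upd y j 0) f"
  have "((\<lambda>s. (y $ j + s) * A + (1 - (y $ j + s)) * B) has_real_derivative A - B) (at 0)"
    by (auto intro!: derivative_eq_intros)
  then have "deriv (\<lambda>s. multilinear_ext f (y + s *\<^sub>R axis j 1)) 0 = A - B"
    unfolding multilinear_ext_along_axis A_def B_def by (rule DERIV_imp_deriv)
  then show ?thesis
    by (simp add: grad_def A_def B_def rounding_expect_upd_one rounding_expect_upd_zero rounding_expect_diff)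
qed

lemma multilinear_ext_differentiable:
  fixes y :: "real ^ 'n::finite"
  shows "multilinear_ext f differentiable (at y)"
proof -
  have coord: "((\<lambda>y. y $ i) has_derivative (\<lambda>h. h $ i)) (at y)" for i :: 'n and y :: "real ^ 'n"
    by (rule bounded_linear_imp_has_derivative[OF bounded_linear_vec_nth])
  have "(\<lambda>y. \<Prod>i\<in>S. y $ i) differentiable (at y)" "(\<lambda>y. \<Prod>i\<in>S. 1 - y $ i) differentiable (at y)"
    for S :: "'n set" and y :: "real ^ 'n"
    unfolding differentiable_def
    by (rule exI, rule has_derivative_prod, rule coord)
      (rule exI, rule has_derivative_prod, rule has_derivative_diff, rule has_derivative_const, rule coord)
  then show ?thesis
    unfolding multilinear_ext_def by (intro differentiable_sum differentiable_mult) auto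
qed

lemma multilinear_ext_has_derivative:
  "(multilinear_ext f has_derivative (\<lambda>h. h \<bullet> grad (multilinear_ext f) y)) (at y)"
proof -
  let ?F = "multilinear_ext f"
  define D where "D = frechet_derivative ?F (at y)"
  have FD: "(?F has_derivative D) (at y)"
    unfolding D_def using multilinear_ext_differentiable frechet_derivative_works by blast
  have lin: "linear D" by (rule has_derivative_linear[OF FD])
  have D_axis: "D (axis j 1) = grad ?F y $ j" for j
  proof -
    have "((\<lambda>s. ?F (y + s *\<^sub>R axis j 1)) has_derivative (\<lambda>s. D (s *\<^sub>R axis j 1))) (at 0)"
      by (rule has_derivative_compose[of "\<lambda>s. y + s *\<^sub>R axis j 1"]) (auto intro!: derivative_eq_intros FD)
    moreover have "(\<lambda>s. D (s *\<^sub>R axis j 1)) = (*) (D (axis j 1))"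
      by (simp add: fun_eq_iff linear_scale[OF lin])
    ultimately have "((\<lambda>s. ?F (y + s *\<^sub>R axis j 1)) has_real_derivative D (axis j 1)) (at 0)"
      by (simp add: has_field_derivative_def)
    then show ?thesis by (simp add: grad_def DERIV_imp_deriv)
  qed
  have "D h = (\<Sum>j\<in>UNIV. h $ j * D (axis j 1))" for h
    by (subst basis_expansion[of h, symmetric])
      (simp add: linear_sum[OF lin] linear_scale[OF lin] scalar_mult_eq_scaleR)
  then have "D = (\<lambda>h. h \<bullet> grad ?F y)"
    by (simp add: fun_eq_iff D_axis inner_vec_def)
  then show ?thesis using FD by simp
qed

lemma grad_multilinear_ext_antimono:
  assumes "submodular f" "y \<in> {0..1}" "y' \<in> {0..1}" "y \<le> y'"
  shows "grad (multilinear_ext f) y' $ j \<le> grad (multilinear_ext f) y $ j"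
  unfolding grad_multilinear_ext
  using assms by (intro rounding_expect_antimono submodular_marginal_antimono)

lemma inner_mono_nonneg_left:
  fixes d a b :: "real ^ 'n::finite"
  assumes "0 \<le> d" "a \<le> b"
  shows "d \<bullet> a \<le> d \<bullet> b"
  using assms unfolding inner_vec_def less_eq_vec_def by (auto intro!: sum_mono mult_left_mono)

lemma multilinear_ext_increment_bounds:
  assumes "submodular f" "y \<in> {0..1}" "y' \<in> {0..1}" "y \<le> y'"
  shows "multilinear_ext f y' - multilinear_ext f y \<le> (y' - y) \<bullet> grad (multilinear_ext f) y"
    and "(y' - y) \<bullet> grad (multilinear_ext f) y' \<le> multilinear_ext f y' - multilinear_ext f y"
proof -
  let ?F = "multilinear_ext f"
  define d where "d = y' - y"
  have d: "0 \<le> d" using assms(4) by (simp add: d_def)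
  have der: "((\<lambda>s. ?F (y + s *\<^sub>R d)) has_derivative (\<lambda>h. (h *\<^sub>R d) \<bullet> grad ?F (y + s *\<^sub>R d)))
      (at s within {0..1})" for s :: real
    by (rule has_derivative_compose[OF _ multilinear_ext_has_derivative]) (auto intro!: derivative_eq_intros)
  obtain \<xi> where \<xi>: "\<xi> \<in> {0..1}" and mvt: "?F y' - ?F y = d \<bullet> grad ?F (y + \<xi> *\<^sub>R d)"
    using mvt_very_simple[of 0 1 "\<lambda>s. ?F (y + s *\<^sub>R d)", OF _ der] by (auto simp: d_def)
  define z where "z = y + \<xi> *\<^sub>R d"
  have "z - y = \<xi> *\<^sub>R d" "y' - z = (1 - \<xi>) *\<^sub>R d"
    by (simp_all add: z_def d_def algebra_simps)
  then have "y \<le> z" "z \<le> y'"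
    using \<xi> d by (metis atLeastAtMost_iff diff_ge_0_iff_ge scaleR_nonneg_nonneg)+
  then have "z \<in> {0..1}" using assms(2,3) by auto
  show "?F y' - ?F y \<le> (y' - y) \<bullet> grad ?F y"
    using grad_multilinear_ext_antimono[OF assms(1,2) \<open>z \<in> {0..1}\<close> \<open>y \<le> z\<close>] mvt d
    by (auto simp: d_def z_def less_eq_vec_def intro: inner_mono_nonneg_left)
  show "(y' - y) \<bullet> grad ?F y' \<le> ?F y' - ?F y"
    using grad_multilinear_ext_antimono[OF assms(1) \<open>z \<in> {0..1}\<close> assms(3) \<open>z \<le> y'\<close>] mvt d
    by (auto simp: d_def z_def less_eq_vec_def intro: inner_mono_nonneg_left)
qed

lemma multilinear_ext_concave_on_chain:
  assumes "submodular f" "y0 \<in> {0..1}" "y1 \<in> {0..1}" "y0 \<le> y1" "0 \<le> l" "l \<le> 1"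
  shows "(1 - l) * multilinear_ext f y0 + l * multilinear_ext f y1
           \<le> multilinear_ext f ((1 - l) *\<^sub>R y0 + l *\<^sub>R y1)"
proof -
  let ?F = "multilinear_ext f"
  define y where "y = (1 - l) *\<^sub>R y0 + l *\<^sub>R y1"
  define G where "G = (y1 - y0) \<bullet> grad ?F y"
  have "y - y0 = l *\<^sub>R (y1 - y0)" "y1 - y = (1 - l) *\<^sub>R (y1 - y0)"
    by (simp_all add: y_def algebra_simps)
  moreover have "0 \<le> y1 - y0" using assms(4) by simp
  ultimately have "y0 \<le> y" "y \<le> y1"
    using assms(5,6) by (metis diff_ge_0_iff_ge scaleR_nonneg_nonneg)+
  then have "y \<in> {0..1}" using assms(2,3) by auto
  have "l * G \<le> ?F y - ?F y0"
    using multilinear_ext_increment_bounds(2)[OF assms(1,2) \<open>y \<in> {0..1}\<close> \<open>y0 \<le> y\<close>]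
    by (simp add: G_def \<open>y - y0 = l *\<^sub>R (y1 - y0)\<close>)
  moreover have "?F y1 - ?F y \<le> (1 - l) * G"
    using multilinear_ext_increment_bounds(1)[OF assms(1) \<open>y \<in> {0..1}\<close> assms(3) \<open>y \<le> y1\<close>]
    by (simp add: G_def \<open>y1 - y = (1 - l) *\<^sub>R (y1 - y0)\<close>)
  ultimately have "l * (?F y1 - ?F y) \<le> (1 - l) * (?F y - ?F y0)"
    using assms(5,6) mult_left_mono[of "?F y1 - ?F y" "(1 - l) * G" l]
      mult_left_mono[of "l * G" "?F y - ?F y0" "1 - l"]
    by (simp add: algebra_simps)
  then show ?thesis by (simp add: y_def algebra_simps)
qed

lemma rounding_prob_indicator_vec: "rounding_prob (indicator_vec S) T = (if T = S then 1 else 0)"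
proof (cases "T = S")
  case False
  then obtain i where "i \<in> T - S \<or> i \<in> S - T" by blast
  then show ?thesis
    using False unfolding rounding_prob_def
    by (elim disjE) (auto simp: indicator_vec_def intro!: prod_zero bexI[of _ i])
qed (simp add: rounding_prob_def indicator_vec_def)

lemma multilinear_ext_indicator_vec: "multilinear_ext f (indicator_vec S) = f S"
proof -
  have "(\<Sum>T\<in>UNIV. f T * rounding_prob (indicator_vec S) T) = (\<Sum>T\<in>UNIV. if T = S then f S else 0)"
    by (rule sum.cong) (auto simp: rounding_prob_indicator_vec)
  then show ?thesis by (simp add: multilinear_ext_eq_rounding_expect rounding_expect_def)
qed

lemma multilinear_ext_zero: "multilinear_ext f 0 = f {}"
  using multilinear_ext_indicator_vec[of f "{}"] by (simp add: indicator_vec_def zero_vec_def)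

lemma multilinear_ext_nonneg: "nonneg_submodular f \<Longrightarrow> y \<in> {0..1} \<Longrightarrow> 0 \<le> multilinear_ext f y"
  unfolding multilinear_ext_eq_rounding_expect rounding_expect_def nonneg_submodular_def
  by (intro sum_nonneg mult_nonneg_nonneg rounding_prob_nonneg) auto

text \<open>
  The coordinatewise maximum \<open>y \<squnion> 1\<^sub>S\<close> is the point at parameter \<open>q = 1 - m\<close> on the
  chain from \<open>1\<^sub>S\<close> to \<open>1\<^sub>S \<squnion> y / q\<close>, so concavity along the chain and \<open>F \<ge> 0\<close> give
  \<open>F(y \<squnion> 1\<^sub>S) \<ge> (1 - q) f(S)\<close>.
\<close>

lemma multilinear_ext_sup_indicator_lower:
  assumes f: "nonneg_submodular f" and y: "y \<in> {0..1}" "\<And>i. y $ i \<le> 1 - m" and m: "0 \<le> m" "m \<le> 1"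
  shows "m * f S \<le> multilinear_ext f (\<chi> i. if i \<in> S then 1 else y $ i)"
proof -
  define q where "q = 1 - m"
  define y1 where "y1 = (\<chi> i. if i \<in> S then 1 else y $ i / q)"
  have yi: "0 \<le> y $ i" "y $ i \<le> q" for i using y by (auto simp: less_eq_vec_def q_def)
  have q: "0 \<le> q" "q \<le> 1" using m by (auto simp: q_def)
  have "indicator_vec S \<in> {0..1}" by (simp add: less_eq_vec_def indicator_vec_def)
  moreover have y1: "y1 \<in> {0..1}"
    using yi q by (auto simp: less_eq_vec_def y1_def divide_le_eq_1)
  moreover have "indicator_vec S \<le> y1"
    using yi q by (auto simp: less_eq_vec_def y1_def indicator_vec_def)
  ultimately have "(1 - q) * f S + q * multilinear_ext f y1
      \<le> multilinear_ext f ((1 - q) *\<^sub>R indicator_vec S + q *\<^sub>R y1)"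
    using multilinear_ext_concave_on_chain[OF nonneg_submodular_imp_submodular[OF f] _ _ _ q]
    by (metis multilinear_ext_indicator_vec)
  moreover have "(1 - q) *\<^sub>R indicator_vec S + q *\<^sub>R y1 = (\<chi> i. if i \<in> S then 1 else y $ i)"
  proof -
    have "q * (y $ i / q) = y $ i" for i
      using yi[of i] by (cases "q = 0") auto
    then show ?thesis by (simp add: vec_eq_iff y1_def indicator_vec_def)
  qed
  moreover have "0 \<le> q * multilinear_ext f y1"
    using multilinear_ext_nonneg[OF f y1] q by simp
  ultimately show ?thesis by (simp add: q_def)
qed

definition has_marginals :: "('n::finite set \<Rightarrow> real) \<Rightarrow> real ^ 'n \<Rightarrow> bool" where
  "has_marginals a z \<longleftrightarrow>
     (\<forall>S. 0 \<le> a S) \<and> (\<Sum>S\<in>UNIV. a S) = 1 \<and> (\<Sum>S\<in>UNIV. a S *\<^sub>R indicator_vec S) = z"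

lemma concave_closure_eq_Sup_has_marginals:
  "concave_closure f z = Sup {(\<Sum>S\<in>UNIV. a S * f S) | a. has_marginals a z}"
  by (simp add: concave_closure_def has_marginals_def)

lemma has_marginals_rounding_prob: "z \<in> {0..1} \<Longrightarrow> has_marginals (rounding_prob z) z"
  using rounding_expect_indicator[of z]
  by (auto simp: has_marginals_def rounding_prob_nonneg sum_rounding_prob vec_eq_iff
      rounding_expect_def indicator_vec_def mult.commute)

lemma mult_SUP_concave_closure_le:
  assumes "P \<noteq> {}" "in_unit_cube P" "0 \<le> c" "0 \<le> K"
    and bound: "\<And>z a. z \<in> P \<Longrightarrow> has_marginals a z \<Longrightarrow> c * (\<Sum>S\<in>UNIV. a S * f S) \<le> K"
  shows "c * (SUP z\<in>P. concave_closure f z) \<le> K"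
proof (cases "c = 0")
  case False
  with assms(3) have "0 < c" by simp
  have "concave_closure f z \<le> K / c" if "z \<in> P" for z
  proof -
    have "z \<in> {0..1}" using assms(2) that by (auto simp: in_unit_cube_def less_eq_vec_def)
    then have "{(\<Sum>S\<in>UNIV. a S * f S) | a. has_marginals a z} \<noteq> {}"
      using has_marginals_rounding_prob by blast
    then show ?thesis
      unfolding concave_closure_eq_Sup_has_marginals
      using bound[OF that] \<open>0 < c\<close> by (intro cSup_least) (auto simp: field_simps)
  qed
  then have "(SUP z\<in>P. concave_closure f z) \<le> K / c"
    using assms(1) by (intro cSUP_least) auto
  then show ?thesis using \<open>0 < c\<close> by (simp add: field_simps)
qed (use assms(4) in simp)

lemma multilinear_ext_gain_lower_bound:
  assumes f: "nonneg_submodular f" and y: "y \<in> {0..1}" "\<And>i. y $ i \<le> 1 - m" and m: "0 \<le> m" "m \<le> 1"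
    and a: "has_marginals a z"
  shows "m * (\<Sum>S\<in>UNIV. a S * f S) - multilinear_ext f y
           \<le> (z \<circ>\<^sub>v (1 - y)) \<bullet> grad (multilinear_ext f) y"
proof -
  let ?F = "multilinear_ext f" and ?G = "grad (multilinear_ext f) y"
  have gain_S: "m * f S - ?F y \<le> (indicator_vec S \<circ>\<^sub>v (1 - y)) \<bullet> ?G" for S
  proof -
    define y' where "y' = (\<chi> i. if i \<in> S then 1 else y $ i)"
    have "y' \<in> {0..1}" "y \<le> y'" using y by (auto simp: less_eq_vec_def y'_def)
    then have "?F y' - ?F y \<le> (y' - y) \<bullet> ?G"
      by (rule multilinear_ext_increment_bounds(1)[OF nonneg_submodular_imp_submodular[OF f] y(1)])
    moreover have "y' - y = indicator_vec S \<circ>\<^sub>v (1 - y)"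
      by (simp add: vec_eq_iff y'_def indicator_vec_def)
    ultimately have "?F y' - ?F y \<le> (indicator_vec S \<circ>\<^sub>v (1 - y)) \<bullet> ?G" by simp
    then show ?thesis
      using multilinear_ext_sup_indicator_lower[OF f y m, of S] by (simp add: y'_def)
  qed
  have "m * (\<Sum>S\<in>UNIV. a S * f S) - ?F y = (\<Sum>S\<in>UNIV. a S * (m * f S - ?F y))"
    using a by (simp add: has_marginals_def sum_distrib_left right_diff_distrib sum_subtractf mult_ac
        flip: sum_distrib_right)
  also have "\<dots> \<le> (\<Sum>S\<in>UNIV. a S * ((indicator_vec S \<circ>\<^sub>v (1 - y)) \<bullet> ?G))"
    using a gain_S by (intro sum_mono mult_left_mono) (auto simp: has_marginals_def)
  also have "\<dots> = (z \<circ>\<^sub>v (1 - y)) \<bullet> ?G"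
    using a unfolding has_marginals_def inner_vec_def
    by (auto simp: sum_distrib_left sum_distrib_right mult_ac intro: sum.swap)
  finally show ?thesis .
qed

section \<open>Growth estimates\<close>

lemma mvt_real_within:
  fixes f f' :: "real \<Rightarrow> real"
  assumes "a \<le> b" "{a..b} \<subseteq> S"
    and "\<And>t. t \<in> {a..b} \<Longrightarrow> (f has_real_derivative f' t) (at t within S)"
  shows "\<exists>\<xi>\<in>{a..b}. f b - f a = f' \<xi> * (b - a)"
proof -
  have "(f has_derivative (\<lambda>h. f' t * h)) (at t within {a..b})" if "a \<le> t" "t \<le> b" for t
    using DERIV_subset[OF assms(3)[of t] assms(2)] that by (simp add: has_field_derivative_def)
  from mvt_very_simple[OF assms(1) this] show ?thesis by (auto simp: mult.commute)
qed

lemma nondecreasing_if_derivative_nonneg_within: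
  fixes f f' :: "real \<Rightarrow> real"
  assumes "a \<le> b" "{a..b} \<subseteq> S"
    and "\<And>t. t \<in> {a..b} \<Longrightarrow> (f has_real_derivative f' t) (at t within S)"
    and "\<And>t. t \<in> {a..b} \<Longrightarrow> 0 \<le> f' t"
  shows "f a \<le> f b"
proof -
  obtain \<xi> where "\<xi> \<in> {a..b}" "f b - f a = f' \<xi> * (b - a)"
    using mvt_real_within[OF assms(1-3)] by blast
  with assms(1,4) show ?thesis by (metis diff_ge_0_iff_ge mult_nonneg_nonneg)
qed

lemma exp_weighted_difference_mono:
  fixes \<phi> \<psi> :: "real \<Rightarrow> real"
  assumes "a \<le> b" "{a..b} \<subseteq> S"
    and "\<And>t. t \<in> {a..b} \<Longrightarrow> (\<phi> has_real_derivative \<phi>' t) (at t within S)"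
    and "\<And>t. t \<in> {a..b} \<Longrightarrow> (\<psi> has_real_derivative \<psi>' t) (at t within S)"
    and "\<And>t. t \<in> {a..b} \<Longrightarrow> \<psi>' t \<le> exp t * (\<phi> t + \<phi>' t)"
  shows "exp a * \<phi> a - \<psi> a \<le> exp b * \<phi> b - \<psi> b"
proof (rule nondecreasing_if_derivative_nonneg_within[OF assms(1,2)])
  fix t assume t: "t \<in> {a..b}"
  show "((\<lambda>t. exp t * \<phi> t - \<psi> t) has_real_derivative exp t * (\<phi> t + \<phi>' t) - \<psi>' t) (at t within S)"
    using assms(3,4)[OF t] by (auto intro!: derivative_eq_intros simp: algebra_simps)
  show "0 \<le> exp t * (\<phi> t + \<phi>' t) - \<psi>' t" using assms(5)[OF t] by simp
qed

text \<open>
  \<open>(1 - u)\<^sup>2 e\<^sup>2\<^sup>t\<close> is nondecreasing whatever the sign of \<open>1 - u\<close>, so \<open>1 - u\<close> never vanishes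
  and, by continuity, stays positive.
\<close>

lemma growth_one_minus_ge_exp:
  fixes u w :: "real \<Rightarrow> real"
  assumes u0: "u 0 = 0" and w: "\<And>t. t \<in> {0..1} \<Longrightarrow> w t \<le> 1"
    and u': "\<And>t. t \<in> {0..1} \<Longrightarrow> (u has_real_derivative w t * (1 - u t)) (at t within {0..1})"
    and t: "t \<in> {0..1}"
  shows "exp (- t) \<le> 1 - u t"
proof -
  have sq: "exp (- s) ^ 2 \<le> (1 - u s)\<^sup>2" if s: "s \<in> {0..1}" for s
  proof -
    have "exp (2 * 0) * (1 - u 0)\<^sup>2 \<le> exp (2 * s) * (1 - u s)\<^sup>2"
    proof (rule nondecreasing_if_derivative_nonneg_within[where f = "\<lambda>s. exp (2 * s) * (1 - u s)\<^sup>2"])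
      fix r assume r: "r \<in> {0..s}"
      then have "r \<in> {0..1}" using s by auto
      show "((\<lambda>s. exp (2 * s) * (1 - u s)\<^sup>2) has_real_derivative
          2 * exp (2 * r) * (1 - u r)\<^sup>2 * (1 - w r)) (at r within {0..1})"
        by (rule derivative_eq_intros u'[OF \<open>r \<in> {0..1}\<close>] refl
            | simp add: power2_eq_square algebra_simps)+
      show "0 \<le> 2 * exp (2 * r) * (1 - u r)\<^sup>2 * (1 - w r)"
        using w[OF \<open>r \<in> {0..1}\<close>] by simp
    qed (use s in auto)
    then have "exp (- (2 * s)) \<le> (1 - u s)\<^sup>2"
      using u0 by (simp add: exp_minus field_simps)
    then show ?thesis by (simp add: exp_of_nat_mult[symmetric] flip: exp_add)
  qed
  have "u differentiable_on {0..1}"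
    using u' unfolding differentiable_on_def differentiable_def has_field_derivative_def by blast
  then have "continuous_on {0..1} u" by (rule differentiable_imp_continuous_on)
  have "u t < 1"
  proof (rule ccontr)
    assume "\<not> u t < 1"
    moreover have "continuous_on {0..t} u"
      using \<open>continuous_on {0..1} u\<close> t by (auto intro: continuous_on_subset)
    ultimately obtain r where "r \<in> {0..t}" "u r = 1"
      using IVT'[of u 0 1 t] u0 t by auto
    then show False using sq[of r] t by simp
  qed
  then show ?thesis using power2_le_imp_le[OF sq[OF t]] by simp
qed

lemma growth_bounds:
  fixes u w :: "real \<Rightarrow> real"
  assumes u0: "u 0 = 0" and w: "\<And>t. t \<in> {0..1} \<Longrightarrow> 0 \<le> w t \<and> w t \<le> p" and "p \<le> 1"
    and u': "\<And>t. t \<in> {0..1} \<Longrightarrow> (u has_real_derivative w t * (1 - u t)) (at t within {0..1})"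
    and t: "t \<in> {0..1}"
  shows "0 \<le> u t \<and> u t \<le> 1 - exp (- t) \<and> u t \<le> p * t"
proof -
  have below_one: "exp (- s) \<le> 1 - u s" if "s \<in> {0..1}" for s
    using growth_one_minus_ge_exp[OF u0 _ u' that] w \<open>p \<le> 1\<close> by force
  have nonneg: "0 \<le> u s" if s: "s \<in> {0..1}" for s
  proof -
    have "u 0 \<le> u s"
    proof (rule nondecreasing_if_derivative_nonneg_within[OF _ _ u'])
      fix r assume "r \<in> {0..s}"
      then have "r \<in> {0..1}" using s by auto
      then have "0 \<le> 1 - u r" using below_one[of r] by (meson exp_ge_zero order_trans)
      then show "0 \<le> w r * (1 - u r)" using w[OF \<open>r \<in> {0..1}\<close>] by simp
    qed (use s in auto)
    then show ?thesis using u0 by simp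
  qed
  have "p * 0 - u 0 \<le> p * t - u t"
  proof (rule nondecreasing_if_derivative_nonneg_within[where f = "\<lambda>s. p * s - u s"])
    fix s assume "s \<in> {0..t}"
    then have s: "s \<in> {0..1}" using t by auto
    show "((\<lambda>s. p * s - u s) has_real_derivative p - w s * (1 - u s)) (at s within {0..1})"
      using u'[OF s] by (auto intro!: derivative_eq_intros)
    have "w s * (1 - u s) \<le> w s" using w[OF s] nonneg[OF s] by (simp add: mult_left_le)
    then show "0 \<le> p - w s * (1 - u s)" using w[OF s] by simp
  qed (use t in auto)
  then show ?thesis using nonneg[OF t] below_one[OF t] u0 by simp
qed

section \<open>The Measured Continuous Greedy trajectory\<close>

text \<open>
  If \<open>x(b)/b\<close> could be strictly separated from \<open>P\<close> by a functional \<open>\<langle>c, \<cdot>\<rangle>\<close>, the mean value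
  theorem applied to \<open>\<langle>c, x\<rangle>\<close> would contradict \<open>x' \<in> P\<close>.
\<close>

lemma mem_scaled_if_derivative_mem:
  fixes x x' :: "real \<Rightarrow> 'a::euclidean_space"
  assumes "convex P" "closed P" "x 0 = 0" "0 \<le> b"
    and x': "\<And>t. t \<in> {0..b} \<Longrightarrow> (x has_vector_derivative x' t) (at t within {0..b})"
    and x'_mem: "\<And>t. t \<in> {0..b} \<Longrightarrow> x' t \<in> P"
  shows "x b \<in> (\<lambda>z. b *\<^sub>R z) ` P"
proof (cases "b = 0")
  case True
  then show ?thesis using assms(3) x'_mem[of 0] by (auto intro!: image_eqI[of _ _ "x' 0"])
next
  case False
  with assms(4) have "0 < b" by simp
  have "(1 / b) *\<^sub>R x b \<in> P"
  proof (rule ccontr)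
    assume "(1 / b) *\<^sub>R x b \<notin> P"
    then obtain c \<beta> where c: "c \<bullet> ((1 / b) *\<^sub>R x b) < \<beta>" "\<forall>z\<in>P. \<beta> < c \<bullet> z"
      using separating_hyperplane_closed_point[OF assms(1,2)] by blast
    have "((\<lambda>t. c \<bullet> x t) has_real_derivative c \<bullet> x' t) (at t within {0..b})" if "t \<in> {0..b}" for t
      using bounded_linear.has_vector_derivative[OF bounded_linear_inner_right x'[OF that]]
      by (simp add: has_real_derivative_iff_has_vector_derivative)
    then obtain \<xi> where "\<xi> \<in> {0..b}" "c \<bullet> x b - c \<bullet> x 0 = c \<bullet> x' \<xi> * (b - 0)"
      using mvt_real_within[of 0 b "{0..b}" "\<lambda>t. c \<bullet> x t" "\<lambda>t. c \<bullet> x' t"] assms(4) by auto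
    moreover have "\<beta> * b < c \<bullet> x' \<xi> * b"
      using c(2) x'_mem[OF \<open>\<xi> \<in> {0..b}\<close>] \<open>0 < b\<close> by (intro mult_strict_right_mono) auto
    ultimately have "\<beta> * b < c \<bullet> x b" using assms(3) by simp
    moreover have "c \<bullet> x b < \<beta> * b"
      using c(1) \<open>0 < b\<close> by (simp add: pos_divide_less_eq)
    ultimately show False by simp
  qed
  then show ?thesis using \<open>0 < b\<close> by (auto intro!: image_eqI[of _ _ "(1 / b) *\<^sub>R x b"])
qed

lemma down_closed_hadamard_mem:
  assumes "down_closed P" "in_unit_cube P" "w \<in> P" "y \<in> {0..1}"
  shows "w \<circ>\<^sub>v (1 - y) \<in> P"
proof -
  have "0 \<le> w $ i" for i using assms(2,3) by (auto simp: in_unit_cube_def)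
  then have "0 \<le> w \<circ>\<^sub>v (1 - y)" "w \<circ>\<^sub>v (1 - y) \<le> w"
    using assms(4) by (auto simp: less_eq_vec_def mult_left_le)
  then show ?thesis using assms(1,3) unfolding down_closed_def by blast
qed

locale measured_continuous_greedy =
  fixes f :: "'n::finite set \<Rightarrow> real" and P :: "(real ^ 'n) set" and p :: real
    and x v :: "real \<Rightarrow> real ^ 'n"
  assumes p: "0 \<le> p" "p < 1"
    and f: "nonneg_submodular f"
    and P: "polytope P" "in_unit_cube P" "down_closed P"
    and P_le_p: "\<forall>z\<in>P. \<forall>i. z $ i \<le> p"
    and trajectory: "mcg_trajectory (multilinear_ext f) P x v"
begin

lemma x_0: "x 0 = 0"
  and v_mem: "t \<in> {0..1} \<Longrightarrow> v t \<in> P"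
  and v_best: "t \<in> {0..1} \<Longrightarrow> w \<in> P \<Longrightarrow>
      (w \<circ>\<^sub>v (1 - x t)) \<bullet> grad (multilinear_ext f) (x t) \<le> (v t \<circ>\<^sub>v (1 - x t)) \<bullet> grad (multilinear_ext f) (x t)"
  and x_derivative: "t \<in> {0..1} \<Longrightarrow> (x has_vector_derivative (v t \<circ>\<^sub>v (1 - x t))) (at t within {0..1})"
  using trajectory by (auto simp: mcg_trajectory_def)

lemma x_coord_bounds:
  assumes "t \<in> {0..1}"
  shows "0 \<le> x t $ i \<and> x t $ i \<le> 1 - exp (- t) \<and> x t $ i \<le> p * t"
proof (rule growth_bounds[where w = "\<lambda>t. v t $ i"])
  show "0 \<le> v s $ i \<and> v s $ i \<le> p" if "s \<in> {0..1}" for s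
    using P(2) P_le_p v_mem[OF that] by (auto simp: in_unit_cube_def)
  show "((\<lambda>t. x t $ i) has_real_derivative v s $ i * (1 - x s $ i)) (at s within {0..1})"
    if "s \<in> {0..1}" for s
    using bounded_linear.has_vector_derivative[OF bounded_linear_vec_nth x_derivative[OF that]]
    by (simp add: has_real_derivative_iff_has_vector_derivative)
qed (use x_0 p assms in auto)

lemma x_mem_cube: "t \<in> {0..1} \<Longrightarrow> x t \<in> {0..1}"
  using x_coord_bounds by (auto simp: less_eq_vec_def intro: order_trans[of _ "1 - exp (- t)"])

lemma x_mem_scaled:
  assumes "b \<in> {0..1}"
  shows "x b \<in> (\<lambda>z. b *\<^sub>R z) ` P"
proof (rule mem_scaled_if_derivative_mem[where x' = "\<lambda>t. v t \<circ>\<^sub>v (1 - x t)"])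
  show "(x has_vector_derivative v t \<circ>\<^sub>v (1 - x t)) (at t within {0..b})" if "t \<in> {0..b}" for t
    using that assms by (intro has_vector_derivative_within_subset[OF x_derivative]) auto
  show "v t \<circ>\<^sub>v (1 - x t) \<in> P" if "t \<in> {0..b}" for t
    using that assms by (intro down_closed_hadamard_mem[OF P(3,2)] v_mem x_mem_cube) auto
qed (use assms x_0 polytope_imp_convex[OF P(1)] polytope_imp_closed[OF P(1)] in auto)

lemma value_has_derivative:
  assumes "t \<in> {0..1}"
  shows "((\<lambda>t. multilinear_ext f (x t)) has_real_derivative
           (v t \<circ>\<^sub>v (1 - x t)) \<bullet> grad (multilinear_ext f) (x t)) (at t within {0..1})"
proof -
  have "((\<lambda>t. multilinear_ext f (x t)) has_derivative
      (\<lambda>h. (h *\<^sub>R (v t \<circ>\<^sub>v (1 - x t))) \<bullet> grad (multilinear_ext f) (x t))) (at t within {0..1})"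
    using x_derivative[OF assms] unfolding has_vector_derivative_def
    by (rule has_derivative_compose[OF _ multilinear_ext_has_derivative])
  then show ?thesis
    unfolding has_field_derivative_def by (rule has_derivative_eq_rhs) (auto simp: fun_eq_iff)
qed

lemma value_derivative_lower:
  assumes "t \<in> {0..1}" "z \<in> P" "has_marginals a z" "0 \<le> m" "m \<le> 1" "\<And>i. x t $ i \<le> 1 - m"
  shows "m * (\<Sum>S\<in>UNIV. a S * f S) - multilinear_ext f (x t)
           \<le> (v t \<circ>\<^sub>v (1 - x t)) \<bullet> grad (multilinear_ext f) (x t)"
  using multilinear_ext_gain_lower_bound[OF f x_mem_cube[OF assms(1)] assms(6,4,5,3)]
    v_best[OF assms(1,2)] by linarith

lemma value_lower_weighted:
  assumes "b \<in> {0..1}" "z \<in> P" "has_marginals a z"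
  shows "b * (\<Sum>S\<in>UNIV. a S * f S) \<le> exp b * multilinear_ext f (x b)"
proof -
  let ?V = "\<Sum>S\<in>UNIV. a S * f S"
  have "exp 0 * multilinear_ext f (x 0) - 0 * ?V \<le> exp b * multilinear_ext f (x b) - b * ?V"
  proof (rule exp_weighted_difference_mono[where \<psi> = "\<lambda>t. t * ?V"])
    fix t assume "t \<in> {0..b}"
    then have t: "t \<in> {0..1}" using assms(1) by auto
    show "((\<lambda>t. t * ?V) has_real_derivative ?V) (at t within {0..1})"
      by (auto intro!: derivative_eq_intros)
    have "exp (- t) * ?V - multilinear_ext f (x t)
        \<le> (v t \<circ>\<^sub>v (1 - x t)) \<bullet> grad (multilinear_ext f) (x t)"
      using x_coord_bounds[OF t] t by (intro value_derivative_lower[OF t assms(2,3)]) auto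
    then have "exp t * (exp (- t) * ?V) \<le> exp t * (multilinear_ext f (x t)
        + (v t \<circ>\<^sub>v (1 - x t)) \<bullet> grad (multilinear_ext f) (x t))"
      by (intro mult_left_mono) auto
    moreover have "exp t * (exp (- t) * ?V) = ?V" by (simp add: exp_minus)
    ultimately show "?V \<le> exp t * (multilinear_ext f (x t)
        + (v t \<circ>\<^sub>v (1 - x t)) \<bullet> grad (multilinear_ext f) (x t))"
      by simp
  qed (use assms(1) value_has_derivative in auto)
  then show ?thesis
    using f by (simp add: x_0 multilinear_ext_zero nonneg_submodular_def)
qed

lemma value_lower_early:
  assumes "b \<in> {0..1}" "z \<in> P" "has_marginals a z"
  shows "b * exp (- b) * (\<Sum>S\<in>UNIV. a S * f S) \<le> multilinear_ext f (x b)"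
  using mult_left_mono[OF value_lower_weighted[OF assms], of "exp (- b)"]
  by (simp add: exp_minus field_simps)

lemma value_lower_late:
  assumes "b \<in> {0..1}" "ln (1 / (1 - p)) \<le> b" "z \<in> P" "has_marginals a z"
  shows "(1 - p - exp (- b) * (1 + ln (1 - p))) * (\<Sum>S\<in>UNIV. a S * f S) \<le> multilinear_ext f (x b)"
proof -
  let ?V = "\<Sum>S\<in>UNIV. a S * f S" and ?t0 = "ln (1 / (1 - p))"
  have t0: "?t0 = - ln (1 - p)" "exp ?t0 = 1 / (1 - p)" "0 \<le> ?t0"
    using p by (simp add: ln_div, subst exp_ln, auto)
  have "exp ?t0 * multilinear_ext f (x ?t0) - (1 - p) * exp ?t0 * ?V
      \<le> exp b * multilinear_ext f (x b) - (1 - p) * exp b * ?V"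
  proof (rule exp_weighted_difference_mono[where \<psi> = "\<lambda>t. (1 - p) * exp t * ?V"])
    fix t assume "t \<in> {?t0..b}"
    then have t: "t \<in> {0..1}" using assms(1) t0(3) by auto
    show "((\<lambda>t. (1 - p) * exp t * ?V) has_real_derivative (1 - p) * exp t * ?V) (at t within {0..1})"
      by (auto intro!: derivative_eq_intros)
    have "x t $ i \<le> 1 - (1 - p)" for i
      using x_coord_bounds[OF t, of i] mult_left_le[of t p] t p by auto
    then have "(1 - p) * ?V - multilinear_ext f (x t)
        \<le> (v t \<circ>\<^sub>v (1 - x t)) \<bullet> grad (multilinear_ext f) (x t)"
      using p by (intro value_derivative_lower[OF t assms(3,4)]) auto
    then have "(1 - p) * ?V \<le> multilinear_ext f (x t)
        + (v t \<circ>\<^sub>v (1 - x t)) \<bullet> grad (multilinear_ext f) (x t)"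
      by simp
    from mult_left_mono[OF this, of "exp t"]
    show "(1 - p) * exp t * ?V \<le> exp t * (multilinear_ext f (x t)
        + (v t \<circ>\<^sub>v (1 - x t)) \<bullet> grad (multilinear_ext f) (x t))"
      by (simp add: algebra_simps)
  qed (use assms(1,2) t0(3) value_has_derivative in auto)
  moreover have "?t0 * ?V \<le> exp ?t0 * multilinear_ext f (x ?t0)"
    using assms t0(3) by (intro value_lower_weighted) auto
  ultimately have "(?t0 - 1) * ?V + (1 - p) * exp b * ?V \<le> exp b * multilinear_ext f (x b)"
    using t0(2) p by (simp add: algebra_simps)
  from mult_left_mono[OF this, of "exp (- b)"] show ?thesis
    by (simp add: t0(1) exp_minus field_simps)
qed

end

lemma late_coefficient_nonneg:
  fixes p b :: real
  assumes "0 \<le> p" "p < 1" "ln (1 / (1 - p)) \<le> b"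
  shows "0 \<le> 1 - p - exp (- b) * (1 + ln (1 - p))"
proof (cases "0 \<le> 1 + ln (1 - p)")
  case True
  have "exp (- b) \<le> exp (- ln (1 / (1 - p)))" using assms(3) by simp
  then have "exp (- b) \<le> 1 - p" using assms(2) by (simp add: exp_minus)
  then have "exp (- b) * (1 + ln (1 - p)) \<le> (1 - p) * (1 + ln (1 - p))"
    using True by (rule mult_right_mono)
  moreover have "(1 - p) * ln (1 - p) \<le> 0"
    using assms(1,2) by (intro mult_nonneg_nonpos) auto
  ultimately show ?thesis by (simp add: algebra_simps)
next
  case False
  then have "exp (- b) * (1 + ln (1 - p)) \<le> 0" by (simp add: mult_nonneg_nonpos)
  then show ?thesis using assms(2) by linarith
qed

theorem theorem3:
  fixes f :: "'n::finite set \<Rightarrow> real"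
    and P :: "(real ^ 'n) set"
    and p :: real
    and x v :: "real \<Rightarrow> real ^ 'n"
  assumes "0 \<le> p" "p < 1"
    and "nonneg_submodular f"
    and "polytope P" "in_unit_cube P" "down_closed P"
    and "\<forall>z\<in>P. \<forall>i. z $ i \<le> p"
    and "mcg_trajectory (multilinear_ext f) P x v"
  shows "\<forall>b\<in>{0..1}.
     x b \<in> (\<lambda>z. b *\<^sub>R z) ` P \<and>
     (b \<le> ln (1 / (1 - p)) \<longrightarrow>
        multilinear_ext f (x b) \<ge> b * exp (- b) * (SUP z\<in>P. concave_closure f z)) \<and>
     (ln (1 / (1 - p)) \<le> b \<longrightarrow>
        multilinear_ext f (x b) \<ge> (1 - p - exp (- b) * (1 + ln (1 - p))) * (SUP z\<in>P. concave_closure f z))"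
proof -
  interpret measured_continuous_greedy f P p x v
    using assms by unfold_locales
  have "P \<noteq> {}" using v_mem[of 0] by auto
  show ?thesis
  proof (intro ballI conjI impI)
    fix b :: real
    assume b: "b \<in> {0..1}"
    have "0 \<le> multilinear_ext f (x b)" by (rule multilinear_ext_nonneg[OF f x_mem_cube[OF b]])
    note SUP_le = mult_SUP_concave_closure_le[OF \<open>P \<noteq> {}\<close> P(2) _ this]
    show "x b \<in> (\<lambda>z. b *\<^sub>R z) ` P" using b by (rule x_mem_scaled)
    show "b * exp (- b) * (SUP z\<in>P. concave_closure f z) \<le> multilinear_ext f (x b)"
      using b by (intro SUP_le value_lower_early) auto
    show "(1 - p - exp (- b) * (1 + ln (1 - p))) * (SUP z\<in>P. concave_closure f z) \<le> multilinear_ext f (x b)"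
      if "ln (1 / (1 - p)) \<le> b"
      using b that late_coefficient_nonneg[OF p that] by (intro SUP_le value_lower_late) auto
  qed
qed

end
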